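(* Consider the two-dimensional map defined below with heterogeneity in speculative trading strategies, i.e. $w^F\neq 0$ and $w^C\neq 0$. Then, in addition to the equilibrium $P_1=(-\Omega\Delta y^{BP},\Delta y^{BP})$, the map admits two additional equilibria $P_2=(\bar e_2,\Delta\bar y_2)$ and $P_3=(\bar e_3,\Delta\bar y_3)$ given by $$\bar e_{2,3}=-\Omega\Delta y^{BP}\pm\sqrt{\frac{w^C}{w^F}},\qquad \Delta\bar y_{2,3}=\Delta y^{BP}.$$
   Context: The state variables are the (log) exchange rate $e_t$ and the output growth rate $\Delta y_t$, evolving according to the map $$e_t=e_{t-1}+(\mu+\rho)\left[w^F\left(-\Omega\Delta y_{t-1}-e_{t-1}\right)^3+w^C\left(e_{t-1}+\Omega\Delta y_{t-1}\right)\right],$$ $$\Delta y_t=\Delta y_{t-1}+w^{flex}\beta\left\{\Delta y^{BP}-\gamma\left[w^F\left(-\Omega\Delta y_{t-1}-e_{t-1}\right)^3+w^C\left(e_{t-1}+\Omega\Delta y_{t-1}\right)\right]-\Delta y_{t-1}\right\},$$ where $\mu>0$, $\rho>0$, $0<\beta<1$, $0<\Omega<1$, $0<w^{flex}<1$, $\Delta y^{BP}\in\mathbb{R}$ is a constant, $\gamma=\frac{(1-\theta)(\mu+\rho)}{\theta\pi}>0$ with $\theta\in(0,1)$, $\pi>0$, and $w^F,w^C\in(0,1)$ are the shares of fundamentalists and chartists with $w^F+w^C=1$. An equilibrium is a fixed point $(\bar e,\Delta\bar y)$ of this map. *)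

theory Defs
  imports Complex_Main
begin

definition gam :: "real \<Rightarrow> real \<Rightarrow> real \<Rightarrow> real \<Rightarrow> real" where
  "gam mu rho theta pii = (1 - theta) * (mu + rho) / (theta * pii)"

definition spec_term :: "real \<Rightarrow> real \<Rightarrow> real \<Rightarrow> real \<Rightarrow> real \<Rightarrow> real" where
  "spec_term wF wC Omega e dy = wF * (- Omega * dy - e) ^ 3 + wC * (e + Omega * dy)"

definition exch_map ::
  "real \<Rightarrow> real \<Rightarrow> real \<Rightarrow> real \<Rightarrow> real \<Rightarrow> real \<Rightarrow> real \<Rightarrow> real \<Rightarrow> real \<Rightarrow> real
   \<Rightarrow> real \<times> real \<Rightarrow> real \<times> real" where
  "exch_map mu rho beta Omega wflex dyBP theta pii wF wC =
     (\<lambda>(e, dy).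
       (e + (mu + rho) * spec_term wF wC Omega e dy,
        dy + wflex * beta * (dyBP - gam mu rho theta pii * spec_term wF wC Omega e dy - dy)))"

end

theory Submission
  imports Defs
begin

text \<open>At a fixed point the first equation forces the speculative term to vanish, since
  \<open>\<mu> + \<rho> > 0\<close>; the second equation then reduces to \<open>\<Delta>y = \<Delta>y\<^sup>B\<^sup>P\<close>.
  The speculative term depends only on the misalignment \<open>z = e + \<Omega> \<Delta>y\<close> and equals
  \<open>z (w\<^sup>C - w\<^sup>F z\<^sup>2)\<close>, whose roots are \<open>0\<close> and \<open>\<plusminus>sqrt (w\<^sup>C / w\<^sup>F)\<close>.\<close>

lemma odd_cubic_eq_0_iff:
  fixes a b z :: real
  assumes "a > 0" and "b \<ge> 0"
  shows "a * (- z) ^ 3 + b * z = 0 \<longleftrightarrow> z = 0 \<or> z = sqrt (b / a) \<or> z = - sqrt (b / a)"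
proof -
  let ?r = "sqrt (b / a)"
  have "?r ^ 2 = b / a"
    using assms by simp
  then have "a * (- z) ^ 3 + b * z = a * z * (?r - z) * (?r + z)"
    using assms by (simp add: field_simps power2_eq_square power3_eq_cube)
  then show ?thesis
    using assms by auto
qed

lemma spec_term_eq_0_iff:
  assumes "wF > 0" and "wC \<ge> 0"
  shows "spec_term wF wC Omega e dy = 0 \<longleftrightarrow>
    e + Omega * dy \<in> {0, sqrt (wC / wF), - sqrt (wC / wF)}"
proof -
  have "- Omega * dy - e = - (e + Omega * dy)"
    by simp
  then have "spec_term wF wC Omega e dy = wF * (- (e + Omega * dy)) ^ 3 + wC * (e + Omega * dy)"
    unfolding spec_term_def by (simp only:)
  then show ?thesis
    using odd_cubic_eq_0_iff[OF assms, of "e + Omega * dy"] by simp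
qed

lemma exch_map_fixed_iff:
  assumes "mu + rho \<noteq> 0" and "wflex * beta \<noteq> 0"
  shows "exch_map mu rho beta Omega wflex dyBP theta pii wF wC (e, dy) = (e, dy) \<longleftrightarrow>
    spec_term wF wC Omega e dy = 0 \<and> dy = dyBP"
  using assms unfolding exch_map_def by auto

theorem proposition2:
  fixes mu rho beta Omega wflex dyBP theta pii wF wC :: real
  assumes "mu > 0" and "rho > 0" and "0 < beta" and "beta < 1"
    and "0 < Omega" and "Omega < 1" and "0 < wflex" and "wflex < 1"
    and "0 < theta" and "theta < 1" and "pii > 0"
    and "0 < wF" and "wF < 1" and "0 < wC" and "wC < 1" and "wF + wC = 1"
  shows "{p. exch_map mu rho beta Omega wflex dyBP theta pii wF wC p = p}
           = {(- Omega * dyBP, dyBP),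
              (- Omega * dyBP + sqrt (wC / wF), dyBP),
              (- Omega * dyBP - sqrt (wC / wF), dyBP)}
         \<and> distinct [(- Omega * dyBP, dyBP),
              (- Omega * dyBP + sqrt (wC / wF), dyBP),
              (- Omega * dyBP - sqrt (wC / wF), dyBP)]"
proof
  have fixed_iff: "exch_map mu rho beta Omega wflex dyBP theta pii wF wC (e, dy) = (e, dy) \<longleftrightarrow>
      dy = dyBP \<and> e + Omega * dy \<in> {0, sqrt (wC / wF), - sqrt (wC / wF)}" for e dy
    using exch_map_fixed_iff spec_term_eq_0_iff assms by auto
  show "{p. exch_map mu rho beta Omega wflex dyBP theta pii wF wC p = p}
      = {(- Omega * dyBP, dyBP),
         (- Omega * dyBP + sqrt (wC / wF), dyBP),
         (- Omega * dyBP - sqrt (wC / wF), dyBP)}"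
    by (auto simp: fixed_iff algebra_simps)
  have "sqrt (wC / wF) > 0"
    using assms by simp
  then show "distinct [(- Omega * dyBP, dyBP),
      (- Omega * dyBP + sqrt (wC / wF), dyBP),
      (- Omega * dyBP - sqrt (wC / wF), dyBP)]"
    by auto
qed

end
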